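(* Let $X$ be a compact countable metric space and $f\colon X\to X$ a continuous map. If $f$ has a scrambled pair, then there exist $\delta>0$ and an infinite $\delta$-scrambled set for $f$.
   Context: For $\delta>0$, a pair $(u,v)$ of points is $\delta$-scrambled if $\liminf_{n\to\infty}d(f^n(u),f^n(v))=0$ and $\limsup_{n\to\infty}d(f^n(u),f^n(v))\ge\delta$; it is a scrambled pair if it is $\delta$-scrambled for some $\delta>0$. A set is $\delta$-scrambled if every pair of its distinct points is $\delta$-scrambled. *)

theory Defs
  imports "HOL-Analysis.Analysis"
begin

definition delta_scrambled_pair ::
  "('a::metric_space \<Rightarrow> 'a) \<Rightarrow> real \<Rightarrow> 'a \<Rightarrow> 'a \<Rightarrow> bool" where
  "delta_scrambled_pair f \<delta> u v \<longleftrightarrow>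
     liminf (\<lambda>n. ereal (dist ((f ^^ n) u) ((f ^^ n) v))) = 0 \<and>
     limsup (\<lambda>n. ereal (dist ((f ^^ n) u) ((f ^^ n) v))) \<ge> ereal \<delta>"

definition scrambled_pair :: "('a::metric_space \<Rightarrow> 'a) \<Rightarrow> 'a \<Rightarrow> 'a \<Rightarrow> bool" where
  "scrambled_pair f u v \<longleftrightarrow> (\<exists>\<delta>>0. delta_scrambled_pair f \<delta> u v)"

definition delta_scrambled_set ::
  "('a::metric_space \<Rightarrow> 'a) \<Rightarrow> real \<Rightarrow> 'a set \<Rightarrow> bool" where
  "delta_scrambled_set f \<delta> S \<longleftrightarrow>
     (\<forall>u\<in>S. \<forall>v\<in>S. u \<noteq> v \<longrightarrow> delta_scrambled_pair f \<delta> u v)"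

end

theory Submission
  imports Defs
begin

(* Let (u, v) be delta-scrambled. The points that both orbits approach simultaneously, along a
   common sequence of times, form a nonempty compact invariant set. Being countable, it contains a
   periodic point c, say f^m c = c: a minimal invariant subset has an isolated point by Baire, and
   the orbit of that point must return to it. Along a suitable residue class of times modulo m
   both orbits still approach c, and for at least one of them, w, the orbit under g = f^m does not
   converge to c, since otherwise the pair would be asymptotic.
   So the g-orbit of w returns arbitrarily close to the fixed point c, but also leaves a fixed
   neighbourhood of c infinitely often. As X is countable, some sphere of radius rho around c is
   surrounded by a gap free of points of X. For j < k the points g^j w and g^k w stay together near
   c for long stretches of time, and when g^k w first crosses the sphere after such a stretch,
   g^j w, which is k - j steps behind, is still inside, so the gap keeps the two points apart.
   Hence the g-orbit of w is an infinite scrambled set for g, and therefore for f. *)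

lemma funpow_mem: "h ` X \<subseteq> X \<Longrightarrow> x \<in> X \<Longrightarrow> (h ^^ n) x \<in> X"
  by (induction n) auto

lemma funpow_fixpoint: "h c = c \<Longrightarrow> (h ^^ n) c = c"
  by (induction n) simp_all

lemma funpow_add_apply: "(h ^^ (m + n)) x = (h ^^ m) ((h ^^ n) x)"
  by (simp add: funpow_add)

lemma continuous_on_funpow:
  assumes "continuous_on X h" "h ` X \<subseteq> X"
  shows "continuous_on X (h ^^ n)"
proof (induction n)
  case 0
  then show ?case by (simp add: continuous_on_id)
next
  case (Suc n)
  have "(h ^^ n) ` X \<subseteq> X"
    using funpow_mem[OF assms(2)] by blast
  then have "continuous_on ((h ^^ n) ` X) h"
    by (rule continuous_on_subset[OF assms(1)])
  with Suc.IH have "continuous_on X (h \<circ> h ^^ n)"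
    by (rule continuous_on_compose)
  then show ?case
    by (simp only: funpow.simps(2))
qed

lemma funpow_uniformly_close:
  assumes "continuous_on X h" "h ` X \<subseteq> X" "c \<in> X" "\<epsilon> > 0"
  obtains d where "d > 0"
    "\<And>x i. x \<in> X \<Longrightarrow> dist x c < d \<Longrightarrow> i \<le> L \<Longrightarrow> dist ((h ^^ i) x) ((h ^^ i) c) < \<epsilon>"
proof -
  have "((h ^^ i) \<longlongrightarrow> (h ^^ i) c) (at c within X)" for i
    using continuous_on_funpow[OF assms(1,2)] assms(3) by (simp add: continuous_on_def)
  then have "\<forall>i\<in>{..L}. \<forall>\<^sub>F x in at c within X. dist ((h ^^ i) x) ((h ^^ i) c) < \<epsilon>"
    using assms(4) by (blast intro: tendstoD)
  then have "\<forall>\<^sub>F x in at c within X. \<forall>i\<in>{..L}. dist ((h ^^ i) x) ((h ^^ i) c) < \<epsilon>"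
    by (simp add: eventually_ball_finite)
  then obtain d where "d > 0"
    and "\<forall>x\<in>X. x \<noteq> c \<and> dist x c < d \<longrightarrow> (\<forall>i\<le>L. dist ((h ^^ i) x) ((h ^^ i) c) < \<epsilon>)"
    by (auto simp: eventually_at)
  with that \<open>\<epsilon> > 0\<close> show thesis
    by (metis dist_self)
qed

lemma LIMSEQ_residue_classes:
  fixes a :: "nat \<Rightarrow> 'b::metric_space"
  assumes "m > 0" and lim: "\<And>s. s < m \<Longrightarrow> (\<lambda>k. a (m * k + s)) \<longlonglongrightarrow> l"
  shows "a \<longlonglongrightarrow> l"
proof (rule metric_LIMSEQ_I)
  fix \<epsilon> :: real assume "\<epsilon> > 0"
  then have "\<forall>\<^sub>F k in sequentially. \<forall>s\<in>{..<m}. dist (a (m * k + s)) l < \<epsilon>"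
    using lim by (intro eventually_ball_finite) (auto dest: tendstoD)
  then obtain K where K: "\<And>k s. k \<ge> K \<Longrightarrow> s < m \<Longrightarrow> dist (a (m * k + s)) l < \<epsilon>"
    by (auto simp: eventually_sequentially)
  show "\<exists>N. \<forall>n\<ge>N. dist (a n) l < \<epsilon>"
  proof (intro exI allI impI)
    fix n assume "n \<ge> m * K"
    then have "n div m \<ge> K"
      using \<open>m > 0\<close> by (metis div_le_mono nonzero_mult_div_cancel_left not_gr0)
    then show "dist (a n) l < \<epsilon>"
      using K[of "n div m" "n mod m"] \<open>m > 0\<close> by simp
  qed
qed

lemma frequently_residue_class:
  fixes P :: "real \<Rightarrow> nat \<Rightarrow> bool"
  assumes "m > 0"
    and freq: "\<And>\<epsilon>. \<epsilon> > 0 \<Longrightarrow> \<exists>\<^sub>F n in sequentially. P \<epsilon> n"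
    and mono: "\<And>\<epsilon> \<epsilon>' n. P \<epsilon> n \<Longrightarrow> \<epsilon> \<le> \<epsilon>' \<Longrightarrow> P \<epsilon>' n"
  shows "\<exists>r<m. \<forall>\<epsilon>>0. \<exists>\<^sub>F k in sequentially. P \<epsilon> (m * k + r)"
proof (rule ccontr)
  assume "\<not> ?thesis"
  then obtain e where e: "\<And>r. r < m \<Longrightarrow> e r > 0 \<and> (\<forall>\<^sub>F k in sequentially. \<not> P (e r) (m * k + r))"
    by (auto simp: not_frequently) metis
  define \<epsilon> where "\<epsilon> = Min (e ` {..<m})"
  have "\<epsilon> > 0"
    unfolding \<epsilon>_def using e \<open>m > 0\<close> by (subst Min_gr_iff) auto
  have "\<forall>\<^sub>F k in sequentially. \<forall>r\<in>{..<m}. \<not> P \<epsilon> (m * k + r)"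
  proof (intro eventually_ball_finite ballI)
    fix r assume "r \<in> {..<m}"
    moreover from this have "\<epsilon> \<le> e r"
      by (simp add: \<epsilon>_def)
    ultimately show "\<forall>\<^sub>F k in sequentially. \<not> P \<epsilon> (m * k + r)"
      using e[of r] mono by (auto elim!: eventually_mono)
  qed simp
  then obtain K where K: "\<And>k r. k \<ge> K \<Longrightarrow> r < m \<Longrightarrow> \<not> P \<epsilon> (m * k + r)"
    by (auto simp: eventually_sequentially)
  obtain n where "n \<ge> m * K" "P \<epsilon> n"
    using freq[OF \<open>\<epsilon> > 0\<close>] by (auto simp: frequently_sequentially)
  moreover have "n div m \<ge> K"
    using \<open>n \<ge> m * K\<close> \<open>m > 0\<close> by (metis div_le_mono nonzero_mult_div_cancel_left not_gr0)
  moreover have "n mod m < m"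
    using \<open>m > 0\<close> by simp
  ultimately show False
    using K[of "n div m" "n mod m"] by (simp only: mult_div_mod_eq)
qed

lemma delta_scrambled_pairI:
  assumes close: "\<And>\<epsilon>. \<epsilon> > 0 \<Longrightarrow> \<exists>\<^sub>F n in sequentially. dist ((f ^^ n) x) ((f ^^ n) y) < \<epsilon>"
    and far: "\<exists>\<^sub>F n in sequentially. \<theta> \<le> dist ((f ^^ n) x) ((f ^^ n) y)"
  shows "delta_scrambled_pair f \<theta> x y"
proof -
  define D where "D = (\<lambda>n. ereal (dist ((f ^^ n) x) ((f ^^ n) y)))"
  have "liminf D \<le> 0"
  proof (rule ccontr)
    assume "\<not> liminf D \<le> 0"
    then have "0 < liminf D"
      by simp
    then obtain z where "0 < ereal z" "ereal z < liminf D"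
      using ereal_dense2 by blast
    then have "\<forall>\<^sub>F n in sequentially. ereal z < D n"
      by (simp add: less_LiminfD)
    moreover have "\<exists>\<^sub>F n in sequentially. D n < ereal z"
      using close[of z] \<open>0 < ereal z\<close> unfolding D_def by simp
    ultimately have "\<exists>\<^sub>F n in sequentially. ereal z < D n \<and> D n < ereal z"
      by (rule frequently_eventually_conj[rotated])
    then obtain n where "ereal z < D n \<and> D n < ereal z"
      by (rule frequentlyE)
    then show False
      using less_asym by blast
  qed
  moreover have "0 \<le> liminf D"
    by (rule Liminf_bounded) (simp add: D_def)
  moreover have "ereal \<theta> \<le> limsup D"
  proof (rule ccontr)
    assume "\<not> ereal \<theta> \<le> limsup D"
    then have "\<forall>\<^sub>F n in sequentially. D n < ereal \<theta>"
      by (simp add: Limsup_lessD not_le)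
    with far have "\<exists>\<^sub>F n in sequentially. D n < ereal \<theta> \<and> \<theta> \<le> dist ((f ^^ n) x) ((f ^^ n) y)"
      by (rule frequently_eventually_conj)
    then obtain n where "D n < ereal \<theta> \<and> \<theta> \<le> dist ((f ^^ n) x) ((f ^^ n) y)"
      by (rule frequentlyE)
    then show False
      by (auto simp: D_def)
  qed
  ultimately show ?thesis
    unfolding delta_scrambled_pair_def D_def[symmetric] by simp
qed

lemma delta_scrambled_pair_frequently_close:
  assumes "delta_scrambled_pair f \<delta> x y" "\<epsilon> > 0"
  shows "\<exists>\<^sub>F n in sequentially. dist ((f ^^ n) x) ((f ^^ n) y) < \<epsilon>"
proof (rule ccontr)
  assume "\<not> ?thesis"
  then have "\<forall>\<^sub>F n in sequentially. ereal \<epsilon> \<le> ereal (dist ((f ^^ n) x) ((f ^^ n) y))"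
    by (simp add: not_frequently not_less)
  then have "ereal \<epsilon> \<le> liminf (\<lambda>n. ereal (dist ((f ^^ n) x) ((f ^^ n) y)))"
    by (rule Liminf_bounded)
  with assms show False
    by (simp add: delta_scrambled_pair_def)
qed

lemma delta_scrambled_pair_not_asymptotic:
  assumes "delta_scrambled_pair f \<delta> x y" "\<delta> > 0"
  shows "\<not> (\<lambda>n. dist ((f ^^ n) x) ((f ^^ n) y)) \<longlonglongrightarrow> 0"
proof
  assume "(\<lambda>n. dist ((f ^^ n) x) ((f ^^ n) y)) \<longlonglongrightarrow> 0"
  then have "limsup (\<lambda>n. ereal (dist ((f ^^ n) x) ((f ^^ n) y))) = 0"
    by (intro lim_imp_Limsup) (auto simp: zero_ereal_def intro: tendsto_ereal)
  with assms show False
    by (simp add: delta_scrambled_pair_def)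
qed

lemma delta_scrambled_pair_neq:
  "delta_scrambled_pair f \<delta> x y \<Longrightarrow> \<delta> > 0 \<Longrightarrow> x \<noteq> y"
  using delta_scrambled_pair_not_asymptotic by fastforce

lemma delta_scrambled_pair_commute:
  "delta_scrambled_pair f \<delta> x y \<longleftrightarrow> delta_scrambled_pair f \<delta> y x"
  by (simp add: delta_scrambled_pair_def dist_commute)

lemma delta_scrambled_pair_funpow:
  assumes "m > 0" "delta_scrambled_pair (f ^^ m) \<delta> x y"
  shows "delta_scrambled_pair f \<delta> x y"
proof -
  define D where "D = (\<lambda>n. ereal (dist ((f ^^ n) x) ((f ^^ n) y)))"
  have sub: "strict_mono (\<lambda>n. m * n)"
    using \<open>m > 0\<close> by (simp add: strict_mono_def)
  have "D \<circ> (\<lambda>n. m * n) = (\<lambda>n. ereal (dist (((f ^^ m) ^^ n) x) (((f ^^ m) ^^ n) y)))"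
    by (simp add: D_def o_def funpow_mult)
  then have "liminf (D \<circ> (\<lambda>n. m * n)) = 0" "ereal \<delta> \<le> limsup (D \<circ> (\<lambda>n. m * n))"
    using assms(2) by (simp_all add: delta_scrambled_pair_def)
  moreover have "0 \<le> liminf D"
    by (rule Liminf_bounded) (simp add: D_def)
  ultimately have "liminf D = 0" "ereal \<delta> \<le> limsup D"
    using liminf_subseq_mono[OF sub, of D] limsup_subseq_mono[OF sub, of D]
    by (metis order.antisym, metis order.trans)
  then show ?thesis
    unfolding delta_scrambled_pair_def D_def[symmetric] by simp
qed

lemma delta_scrambled_set_funpow:
  "m > 0 \<Longrightarrow> delta_scrambled_set (f ^^ m) \<delta> S \<Longrightarrow> delta_scrambled_set f \<delta> S"
  by (simp add: delta_scrambled_set_def delta_scrambled_pair_funpow)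

lemma countable_compact_isolated_point:
  fixes M :: "'a::metric_space set"
  assumes "compact M" "countable M" "M \<noteq> {}"
  obtains p e where "p \<in> M" "e > 0" "\<And>y. y \<in> M \<Longrightarrow> dist y p < e \<Longrightarrow> y = p"
proof (rule ccontr)
  assume no_isolated_point: "\<not> thesis"
  note isolated_point = that
  let ?T = "top_of_set M"
  have empty_interior: "?T interior_of {x} = {}" if "x \<in> M" for x
  proof (rule ccontr)
    assume "?T interior_of {x} \<noteq> {}"
    then have "openin ?T {x}"
      by (metis interior_of_subset openin_interior_of subset_singletonD)
    then obtain e where "e > 0" "\<forall>y\<in>M. dist y x < e \<longrightarrow> y \<in> {x}"
      unfolding openin_euclidean_subtopology_iff by blast
    with \<open>x \<in> M\<close> no_isolated_point isolated_point show False
      by blast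
  qed
  have "?T interior_of \<Union>((\<lambda>x. {x}) ` M) = {}"
  proof (rule Baire_category_alt)
    have "locally_compact_space ?T"
      using assms(1) by (simp add: compact_imp_locally_compact_space compact_space_subtopology)
    moreover have "regular_space ?T"
      by (intro metrizable_imp_regular_space metrizable_space_subtopology metrizable_space_euclidean)
    ultimately show "completely_metrizable_space ?T \<or> locally_compact_space ?T \<and> regular_space ?T"
      by blast
    show "countable ((\<lambda>x. {x}) ` M)"
      using assms(2) by simp
    show "closedin ?T T \<and> ?T interior_of T = {}" if "T \<in> (\<lambda>x. {x}) ` M" for T
      using that empty_interior by (auto simp: closedin_closed_Int)
  qed
  then show False
    using assms(3) by (auto simp: interior_of_openin)
qed

lemma countable_compact_distance_gap:
  fixes X :: "'a::metric_space set"
  assumes "compact X" "countable X" "\<eta> > 0"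
  obtains \<rho> \<theta> where "0 < \<rho>" "\<rho> < \<eta>" "\<theta> > 0" "\<And>x. x \<in> X \<Longrightarrow> \<theta> \<le> \<bar>dist x c - \<rho>\<bar>"
proof -
  define R where "R = (\<lambda>x. dist x c) ` X"
  have "closed R"
    unfolding R_def using assms(1)
    by (intro compact_imp_closed compact_continuous_image continuous_intros)
  have "uncountable {0<..<\<eta>}"
    using assms(3) by (simp add: uncountable_open_interval)
  moreover have "countable R"
    unfolding R_def using assms(2) by simp
  ultimately have "\<not> {0<..<\<eta>} \<subseteq> R"
    using countable_subset[of "{0<..<\<eta>}" R] by blast
  then obtain \<rho> where \<rho>: "\<rho> \<in> {0<..<\<eta>}" "\<rho> \<notin> R"
    unfolding subset_iff by blast
  have "open (- R)"
    using \<open>closed R\<close> by (simp add: open_Compl)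
  then obtain \<theta> where "\<theta> > 0" "ball \<rho> \<theta> \<subseteq> - R"
    using \<rho>(2) by (auto simp: open_contains_ball)
  have gap: "\<theta> \<le> \<bar>dist x c - \<rho>\<bar>" if "x \<in> X" for x
  proof (rule ccontr)
    assume "\<not> \<theta> \<le> \<bar>dist x c - \<rho>\<bar>"
    then have "dist x c \<in> ball \<rho> \<theta>"
      by (simp add: dist_real_def abs_minus_commute)
    moreover have "dist x c \<in> R"
      using that by (simp add: R_def)
    ultimately show False
      using \<open>ball \<rho> \<theta> \<subseteq> - R\<close> by blast
  qed
  show thesis
    by (rule that[of \<rho> \<theta>]) (use \<rho>(1) \<open>\<theta> > 0\<close> gap in auto)
qed

lemma compact_frequently_common_limit:
  fixes X :: "'a::metric_space set"
  assumes "compact X" "\<And>n. x n \<in> X"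
    and close: "\<And>\<epsilon>. \<epsilon> > 0 \<Longrightarrow> \<exists>\<^sub>F n in sequentially. dist (x n) (y n) < \<epsilon>"
  obtains l where "l \<in> X" "\<And>\<epsilon>. \<epsilon> > 0 \<Longrightarrow> \<exists>\<^sub>F n in sequentially. dist (x n) l < \<epsilon> \<and> dist (y n) l < \<epsilon>"
proof -
  have "\<forall>i. \<exists>n\<ge>i. dist (x n) (y n) < inverse (real (Suc i))"
    using close by (simp add: frequently_sequentially)
  then obtain s where s: "\<And>i. s i \<ge> i" "\<And>i. dist (x (s i)) (y (s i)) < inverse (real (Suc i))"
    by metis
  obtain l r where "l \<in> X" "strict_mono r" and lim: "(x \<circ> s \<circ> r) \<longlonglongrightarrow> l"
    using seq_compactE[OF compact_imp_seq_compact[OF assms(1)], of "x \<circ> s"] assms(2) by auto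
  have diagonal: "(\<lambda>i. dist (x (s i)) (y (s i))) \<longlonglongrightarrow> 0"
    using s(2) by (intro Lim_null_comparison[OF always_eventually LIMSEQ_inverse_real_of_nat])
      (auto intro: less_imp_le)
  have common: "\<exists>\<^sub>F n in sequentially. dist (x n) l < \<epsilon> \<and> dist (y n) l < \<epsilon>"
    if "\<epsilon> > 0" for \<epsilon>
    unfolding frequently_sequentially
  proof
    fix N
    have "\<forall>\<^sub>F i in sequentially. dist (x (s (r i))) l < \<epsilon> / 2"
      using tendstoD[OF lim, of "\<epsilon> / 2"] \<open>\<epsilon> > 0\<close> by simp
    moreover have "\<forall>\<^sub>F i in sequentially. dist (x (s (r i))) (y (s (r i))) < \<epsilon> / 2"
      using tendstoD[OF LIMSEQ_subseq_LIMSEQ[OF diagonal \<open>strict_mono r\<close>], of "\<epsilon> / 2"] \<open>\<epsilon> > 0\<close>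
      by (simp add: o_def)
    moreover have "\<forall>\<^sub>F i in sequentially. N \<le> i"
      by (rule eventually_ge_at_top)
    ultimately have "\<forall>\<^sub>F i in sequentially. dist (x (s (r i))) l < \<epsilon> / 2
        \<and> dist (x (s (r i))) (y (s (r i))) < \<epsilon> / 2 \<and> N \<le> i"
      by eventually_elim blast
    then obtain i where i: "dist (x (s (r i))) l < \<epsilon> / 2"
        "dist (x (s (r i))) (y (s (r i))) < \<epsilon> / 2" "N \<le> i"
      by (auto dest: eventually_happens'[OF sequentially_bot])
    have "N \<le> s (r i)"
      using i(3) seq_suble[OF \<open>strict_mono r\<close>, of i] s(1)[of "r i"] by linarith
    moreover have "dist (x (s (r i))) l < \<epsilon>"
      using i(1) \<open>\<epsilon> > 0\<close> by linarith
    moreover have "dist (y (s (r i))) l < \<epsilon>"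
      using i(1,2) dist_triangle3[of "y (s (r i))" l "x (s (r i))"] by linarith
    ultimately show "\<exists>n\<ge>N. dist (x n) l < \<epsilon> \<and> dist (y n) l < \<epsilon>"
      by blast
  qed
  show thesis
    by (rule that[OF \<open>l \<in> X\<close> common])
qed

definition closed_invariant_subsets :: "('a::topological_space \<Rightarrow> 'a) \<Rightarrow> 'a set \<Rightarrow> 'a set set" where
  "closed_invariant_subsets f K = {M. M \<subseteq> K \<and> M \<noteq> {} \<and> closed M \<and> f ` M \<subseteq> M}"

lemma Inter_chain_closed_invariant_subsets:
  fixes K :: "'a::metric_space set"
  assumes "compact K" "\<M> \<noteq> {}" "subset.chain (closed_invariant_subsets f K) \<M>"
  shows "\<Inter>\<M> \<in> closed_invariant_subsets f K"
proof -
  have \<M>: "\<M> \<subseteq> closed_invariant_subsets f K"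
    and comparable: "\<And>X Y. X \<in> \<M> \<Longrightarrow> Y \<in> \<M> \<Longrightarrow> X \<subseteq> Y \<or> Y \<subseteq> X"
    using assms(3) by (simp_all add: subset_chain_def)
  obtain M where "M \<in> \<M>"
    using assms(2) by blast
  then have "\<Inter>\<M> \<subseteq> K"
    using \<M> by (auto simp: closed_invariant_subsets_def)
  have "K \<inter> \<Inter>\<M> \<noteq> {}"
  proof (rule compact_imp_fip[OF \<open>compact K\<close>])
    show "closed T" if "T \<in> \<M>" for T
      using that \<M> by (auto simp: closed_invariant_subsets_def)
    show "K \<inter> \<Inter>\<F> \<noteq> {}" if "finite \<F>" "\<F> \<subseteq> \<M>" for \<F>
    proof (cases "\<F> = {}")
      case True
      then show ?thesis
        using \<open>M \<in> \<M>\<close> \<M> by (auto simp: closed_invariant_subsets_def)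
    next
      case False
      have "subset.chain \<M> \<F>"
        unfolding subset_chain_def using that(2) by (simp add: comparable subsetD[OF that(2)])
      then have "\<Inter>\<F> \<in> \<F>"
        using Inter_in_chain[OF \<open>finite \<F>\<close> False] by blast
      then have "\<Inter>\<F> \<in> closed_invariant_subsets f K"
        using that(2) \<M> by blast
      then show ?thesis
        by (simp add: closed_invariant_subsets_def inf.absorb2)
    qed
  qed
  moreover have "closed (\<Inter>\<M>)"
    using \<M> by (auto simp: closed_invariant_subsets_def intro!: closed_Inter)
  moreover have "f ` \<Inter>\<M> \<subseteq> \<Inter>\<M>"
  proof (rule Inter_greatest)
    fix X assume "X \<in> \<M>"
    then have "f ` X \<subseteq> X"
      using \<M> by (auto simp: closed_invariant_subsets_def)
    then show "f ` \<Inter>\<M> \<subseteq> X"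
      using Inter_lower[OF \<open>X \<in> \<M>\<close>] by (meson image_mono order.trans)
  qed
  ultimately show ?thesis
    using \<open>\<Inter>\<M> \<subseteq> K\<close> by (auto simp: closed_invariant_subsets_def)
qed

lemma minimal_closed_invariant_subset:
  fixes K :: "'a::metric_space set"
  assumes "compact K" "K \<in> closed_invariant_subsets f K"
  obtains M where "M \<in> closed_invariant_subsets f K"
    "\<And>N. N \<in> closed_invariant_subsets f K \<Longrightarrow> N \<subseteq> M \<Longrightarrow> N = M"
proof -
  \<comment> \<open>Zorn's lemma for the complements turns maximal elements into minimal ones.\<close>
  let ?\<A> = "uminus ` closed_invariant_subsets f K"
  have "\<exists>U\<in>?\<A>. \<forall>X\<in>\<C>. X \<subseteq> U" if "\<C> \<in> chains ?\<A>" for \<C>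
  proof (cases "\<C> = {}")
    case True
    then show ?thesis
      using assms(2) by blast
  next
    case False
    have \<C>: "\<C> \<subseteq> ?\<A>" and comparable: "\<And>X Y. X \<in> \<C> \<Longrightarrow> Y \<in> \<C> \<Longrightarrow> X \<subseteq> Y \<or> Y \<subseteq> X"
      using that by (simp_all add: chains_alt_def subset_chain_def)
    have "subset.chain (closed_invariant_subsets f K) (uminus ` \<C>)"
    proof (unfold subset_chain_def, intro conjI ballI)
      show "uminus ` \<C> \<subseteq> closed_invariant_subsets f K"
        using \<C> by auto
      fix X Y assume "X \<in> uminus ` \<C>" "Y \<in> uminus ` \<C>"
      then obtain A B where "A \<in> \<C>" "B \<in> \<C>" "X = - A" "Y = - B"
        by blast
      then show "X \<subseteq> Y \<or> Y \<subseteq> X"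
        using comparable[OF \<open>A \<in> \<C>\<close> \<open>B \<in> \<C>\<close>] by (metis Compl_subset_Compl_iff)
    qed
    then have "\<Inter>(uminus ` \<C>) \<in> closed_invariant_subsets f K"
      using False by (intro Inter_chain_closed_invariant_subsets[OF assms(1)]) auto
    then have "- \<Inter>(uminus ` \<C>) \<in> ?\<A>"
      by (rule rev_image_eqI) simp
    moreover have "X \<subseteq> - \<Inter>(uminus ` \<C>)" if "X \<in> \<C>" for X
      by (rule compl_le_swap1, rule Inter_lower) (use that in simp)
    ultimately show ?thesis
      by (intro bexI[of _ "- \<Inter>(uminus ` \<C>)"] ballI)
  qed
  then have "\<exists>M'\<in>?\<A>. \<forall>X\<in>?\<A>. M' \<subseteq> X \<longrightarrow> X = M'"
    by (intro Zorn_Lemma2 ballI)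
  then obtain M' where "M' \<in> ?\<A>" and maximal: "\<forall>X\<in>?\<A>. M' \<subseteq> X \<longrightarrow> X = M'" ..
  from \<open>M' \<in> ?\<A>\<close> obtain M where M: "M' = - M" "M \<in> closed_invariant_subsets f K"
    by (rule imageE)
  have "N = M" if "N \<in> closed_invariant_subsets f K" "N \<subseteq> M" for N
  proof -
    have "- N = M'"
      using maximal that M(1) by auto
    then show ?thesis
      using M(1) by simp
  qed
  with M(2) show thesis
    by (rule that)
qed

lemma countable_compact_invariant_periodic_point:
  fixes K :: "'a::metric_space set"
  assumes "compact K" "countable K" "K \<noteq> {}" "continuous_on K f" "f ` K \<subseteq> K"
  obtains c m where "c \<in> K" "m > 0" "(f ^^ m) c = c"
proof -
  have "K \<in> closed_invariant_subsets f K"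
    using assms(1,3,5) by (simp add: closed_invariant_subsets_def compact_imp_closed)
  then obtain M where "M \<in> closed_invariant_subsets f K"
    and minimal: "\<And>N. N \<in> closed_invariant_subsets f K \<Longrightarrow> N \<subseteq> M \<Longrightarrow> N = M"
    using minimal_closed_invariant_subset[OF assms(1)] by blast
  then have M: "M \<subseteq> K" "M \<noteq> {}" "closed M" "f ` M \<subseteq> M"
    by (simp_all add: closed_invariant_subsets_def)
  have "compact M"
    using compact_Int_closed[OF \<open>compact K\<close> M(3)] M(1) by (simp add: inf.absorb2)
  moreover have "countable M"
    using M(1) \<open>countable K\<close> by (rule countable_subset)
  ultimately obtain p e where p: "p \<in> M" "e > 0" "\<And>y. y \<in> M \<Longrightarrow> dist y p < e \<Longrightarrow> y = p"
    using countable_compact_isolated_point M(2) by blast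
  define orbit where "orbit = range (\<lambda>k. (f ^^ k) (f p))"
  have "f p \<in> M"
    using M(4) p(1) by blast
  then have "orbit \<subseteq> M"
    unfolding orbit_def using funpow_mem[OF M(4)] by blast
  then have "closure orbit \<subseteq> M"
    using M(3) by (rule closure_minimal)
  have "f ` orbit \<subseteq> orbit"
  proof (rule image_subsetI)
    fix x assume "x \<in> orbit"
    then obtain k where "x = (f ^^ k) (f p)"
      unfolding orbit_def by blast
    then have "f x = (f ^^ Suc k) (f p)"
      by simp
    then show "f x \<in> orbit"
      unfolding orbit_def by (rule range_eqI)
  qed
  moreover have "continuous_on (closure orbit) f"
    using continuous_on_subset[OF assms(4)] \<open>closure orbit \<subseteq> M\<close> M(1) by blast
  ultimately have "f ` closure orbit \<subseteq> closure orbit"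
    using closure_subset by (intro image_closure_subset) auto
  then have "closure orbit = M"
    using \<open>closure orbit \<subseteq> M\<close> M(1)
    by (intro minimal) (auto simp: closed_invariant_subsets_def orbit_def)
  with p(1) have "p \<in> closure orbit"
    by simp
  then obtain y where "y \<in> orbit" "dist y p < e"
    using p(2) unfolding closure_approachable by blast
  then obtain k where "(f ^^ k) (f p) = p"
    using \<open>orbit \<subseteq> M\<close> p(3) unfolding orbit_def by blast
  then have "(f ^^ Suc k) p = p"
    by (simp only: funpow_Suc_right o_apply)
  show thesis
    by (rule that[of p "Suc k"]) (use \<open>(f ^^ Suc k) p = p\<close> p(1) M(1) in auto)
qed

definition common_limit_points :: "('a::metric_space \<Rightarrow> 'a) \<Rightarrow> 'a \<Rightarrow> 'a \<Rightarrow> 'a set" where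
  "common_limit_points f u v =
    {c. \<forall>\<epsilon>>0. \<exists>\<^sub>F n in sequentially. dist ((f ^^ n) u) c < \<epsilon> \<and> dist ((f ^^ n) v) c < \<epsilon>}"

lemma closed_common_limit_points: "closed (common_limit_points f u v)"
proof -
  have "c \<in> common_limit_points f u v" if c: "c \<in> closure (common_limit_points f u v)" for c
    unfolding common_limit_points_def
  proof (intro CollectI allI impI)
    fix \<epsilon> :: real assume "\<epsilon> > 0"
    then have "\<epsilon> / 2 > 0"
      by simp
    with c obtain y where "y \<in> common_limit_points f u v" "dist y c < \<epsilon> / 2"
      unfolding closure_approachable by blast
    then have "dist c y < \<epsilon> / 2"
      by (simp add: dist_commute)
    from \<open>y \<in> common_limit_points f u v\<close> have "\<exists>\<^sub>F n in sequentially. dist ((f ^^ n) u) y < \<epsilon> / 2 \<and> dist ((f ^^ n) v) y < \<epsilon> / 2"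
      using \<open>\<epsilon> / 2 > 0\<close> unfolding common_limit_points_def by blast
    then show "\<exists>\<^sub>F n in sequentially. dist ((f ^^ n) u) c < \<epsilon> \<and> dist ((f ^^ n) v) c < \<epsilon>"
    proof (rule frequently_elim1)
      fix n assume "dist ((f ^^ n) u) y < \<epsilon> / 2 \<and> dist ((f ^^ n) v) y < \<epsilon> / 2"
      then show "dist ((f ^^ n) u) c < \<epsilon> \<and> dist ((f ^^ n) v) c < \<epsilon>"
        using dist_triangle_half_l[of _ y \<epsilon> c] \<open>dist c y < \<epsilon> / 2\<close> by blast
    qed
  qed
  then have "closure (common_limit_points f u v) \<subseteq> common_limit_points f u v"
    by (rule subsetI)
  then show ?thesis
    by (simp only: closure_subset_eq)
qed

lemma common_limit_points_subset:
  assumes "closed X" "f ` X \<subseteq> X" "u \<in> X"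
  shows "common_limit_points f u v \<subseteq> X"
proof
  fix c assume "c \<in> common_limit_points f u v"
  have "\<exists>y\<in>X. dist y c < \<epsilon>" if "\<epsilon> > 0" for \<epsilon>
  proof -
    from \<open>c \<in> common_limit_points f u v\<close> \<open>\<epsilon> > 0\<close>
    have "\<exists>\<^sub>F n in sequentially. dist ((f ^^ n) u) c < \<epsilon> \<and> dist ((f ^^ n) v) c < \<epsilon>"
      unfolding common_limit_points_def by blast
    then obtain n where "dist ((f ^^ n) u) c < \<epsilon>"
      by (auto elim: frequentlyE)
    then show ?thesis
      using funpow_mem[OF assms(2,3)] by blast
  qed
  then show "c \<in> X"
    using closed_approachable[OF assms(1)] by blast
qed

lemma common_limit_points_invariant:
  assumes "continuous_on X f" "f ` X \<subseteq> X" "closed X" "u \<in> X" "v \<in> X"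
  shows "f ` common_limit_points f u v \<subseteq> common_limit_points f u v"
proof (rule image_subsetI)
  fix c assume c: "c \<in> common_limit_points f u v"
  then have "c \<in> X"
    using common_limit_points_subset[OF assms(3,2,4)] by blast
  show "f c \<in> common_limit_points f u v"
    unfolding common_limit_points_def
  proof (intro CollectI allI impI)
    fix \<epsilon> :: real assume "\<epsilon> > 0"
    then obtain d where "d > 0" and d: "\<And>x. x \<in> X \<Longrightarrow> dist x c < d \<Longrightarrow> dist (f x) (f c) < \<epsilon>"
      using assms(1) \<open>c \<in> X\<close> unfolding continuous_on_iff by blast
    have "\<exists>\<^sub>F n in sequentially. dist ((f ^^ n) u) c < d \<and> dist ((f ^^ n) v) c < d"
      using c \<open>d > 0\<close> by (simp add: common_limit_points_def)
    then have "\<exists>\<^sub>F n in sequentially. dist ((f ^^ Suc n) u) (f c) < \<epsilon> \<and> dist ((f ^^ Suc n) v) (f c) < \<epsilon>"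
      by (rule frequently_elim1) (simp add: d funpow_mem assms(2,4,5))
    then show "\<exists>\<^sub>F n in sequentially. dist ((f ^^ n) u) (f c) < \<epsilon> \<and> dist ((f ^^ n) v) (f c) < \<epsilon>"
      unfolding frequently_sequentially by (meson le_SucI)
  qed
qed

lemma funpow_orbits_asymptotic:
  fixes f :: "'a::metric_space \<Rightarrow> 'a"
  assumes "continuous_on X f" "f ` X \<subseteq> X" "c \<in> X" "x \<in> X" "y \<in> X" "m > 0"
    and "(\<lambda>k. (f ^^ (m * k)) x) \<longlonglongrightarrow> c" "(\<lambda>k. (f ^^ (m * k)) y) \<longlonglongrightarrow> c"
  shows "(\<lambda>n. dist ((f ^^ n) x) ((f ^^ n) y)) \<longlonglongrightarrow> 0"
proof (rule LIMSEQ_residue_classes[OF \<open>m > 0\<close>])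
  fix s
  have lim: "(\<lambda>k. (f ^^ s) ((f ^^ (m * k)) z)) \<longlonglongrightarrow> (f ^^ s) c"
    if "z \<in> X" "(\<lambda>k. (f ^^ (m * k)) z) \<longlonglongrightarrow> c" for z
    by (intro continuous_on_tendsto_compose[OF continuous_on_funpow[OF assms(1,2)] that(2) \<open>c \<in> X\<close>])
      (simp add: funpow_mem[OF assms(2) that(1)])
  have "(f ^^ (m * k + s)) z = (f ^^ s) ((f ^^ (m * k)) z)" for k z
    by (metis add.commute funpow_add_apply)
  then show "(\<lambda>k. dist ((f ^^ (m * k + s)) x) ((f ^^ (m * k + s)) y)) \<longlonglongrightarrow> 0"
    using tendsto_dist[OF lim[OF assms(4,7)] lim[OF assms(5,8)]] by simp
qed

lemma orbit_lingers_near_fixed_point: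
  assumes "continuous_on X g" "g ` X \<subseteq> X" "c \<in> X" "g c = c" "w \<in> X"
    and recurrent: "\<And>\<epsilon>. \<epsilon> > 0 \<Longrightarrow> \<exists>\<^sub>F k in sequentially. dist ((g ^^ k) w) c < \<epsilon>"
    and "\<epsilon> > 0"
  shows "\<exists>\<^sub>F k in sequentially. \<forall>i\<le>L. dist ((g ^^ (k + i)) w) c < \<epsilon>"
proof -
  obtain d where "d > 0"
    and d: "\<And>x i. x \<in> X \<Longrightarrow> dist x c < d \<Longrightarrow> i \<le> L \<Longrightarrow> dist ((g ^^ i) x) ((g ^^ i) c) < \<epsilon>"
    using funpow_uniformly_close[OF assms(1-3) \<open>\<epsilon> > 0\<close>] by blast
  show ?thesis
    using recurrent[OF \<open>d > 0\<close>]
  proof (rule frequently_elim1)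
    fix k assume "dist ((g ^^ k) w) c < d"
    moreover have "(g ^^ (k + i)) w = (g ^^ i) ((g ^^ k) w)" for i
      by (metis add.commute funpow_add_apply)
    ultimately show "\<forall>i\<le>L. dist ((g ^^ (k + i)) w) c < \<epsilon>"
      using d funpow_mem[OF assms(2,5)] funpow_fixpoint[of g c, OF assms(4)] by simp
  qed
qed

lemma frequently_upcrossing:
  fixes b :: "nat \<Rightarrow> real"
  assumes "j < k"
    and below: "\<exists>\<^sub>F n in sequentially. \<forall>i\<le>k. b (n + i) < \<rho>"
    and above: "\<exists>\<^sub>F n in sequentially. \<rho> \<le> b n"
  shows "\<exists>\<^sub>F n in sequentially. b (n + j) < \<rho> \<and> \<rho> \<le> b (n + k)"
  unfolding frequently_sequentially
proof
  fix N
  obtain n\<^sub>0 where "N \<le> n\<^sub>0" and n\<^sub>0: "\<And>i. i \<le> k \<Longrightarrow> b (n\<^sub>0 + i) < \<rho>"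
    using below by (auto simp: frequently_sequentially)
  have "\<exists>t. n\<^sub>0 \<le> t \<and> \<rho> \<le> b t"
    using above by (auto simp: frequently_sequentially)
  define t where "t = (LEAST t. n\<^sub>0 \<le> t \<and> \<rho> \<le> b t)"
  have t: "n\<^sub>0 \<le> t" "\<rho> \<le> b t"
    using LeastI_ex[OF \<open>\<exists>t. n\<^sub>0 \<le> t \<and> \<rho> \<le> b t\<close>] by (simp_all add: t_def)
  have before_t: "b s < \<rho>" if "n\<^sub>0 \<le> s" "s < t" for s
    using not_less_Least[of s "\<lambda>t. n\<^sub>0 \<le> t \<and> \<rho> \<le> b t"] that by (simp add: t_def)
  have "n\<^sub>0 + k < t"
  proof (rule ccontr)
    assume "\<not> n\<^sub>0 + k < t"
    then have "b (n\<^sub>0 + (t - n\<^sub>0)) < \<rho>"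
      by (intro n\<^sub>0) simp
    with t show False
      by simp
  qed
  then show "\<exists>n\<ge>N. b (n + j) < \<rho> \<and> \<rho> \<le> b (n + k)"
    using before_t[of "t - k + j"] t \<open>j < k\<close> \<open>N \<le> n\<^sub>0\<close> by (intro exI[of _ "t - k"]) auto
qed

lemma infinite_delta_scrambled_sequence:
  fixes x :: "nat \<Rightarrow> 'a::metric_space"
  assumes "\<theta> > 0" and pair: "\<And>j k. j < k \<Longrightarrow> delta_scrambled_pair f \<theta> (x j) (x k)"
  shows "infinite (range x)" "delta_scrambled_set f \<theta> (range x)"
proof -
  have pair': "delta_scrambled_pair f \<theta> (x j) (x k)" if "j \<noteq> k" for j k
  proof (cases "j < k")
    case True
    then show ?thesis
      by (rule pair)
  next
    case False
    with that have "k < j"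
      by linarith
    then show ?thesis
      by (subst delta_scrambled_pair_commute) (rule pair)
  qed
  have "inj x"
  proof (rule injI)
    fix j k assume "x j = x k"
    then show "j = k"
      using delta_scrambled_pair_neq[OF pair'[of j k] \<open>\<theta> > 0\<close>] by blast
  qed
  then show "infinite (range x)"
    by (rule range_inj_infinite)
  show "delta_scrambled_set f \<theta> (range x)"
    unfolding delta_scrambled_set_def by (auto intro: pair')
qed

lemma infinite_scrambled_orbit_near_fixed_point:
  fixes g :: "'a::metric_space \<Rightarrow> 'a"
  assumes "compact X" "countable X" "continuous_on X g" "g ` X \<subseteq> X"
    and "c \<in> X" "g c = c" "w \<in> X"
    and recurrent: "\<And>\<epsilon>. \<epsilon> > 0 \<Longrightarrow> \<exists>\<^sub>F k in sequentially. dist ((g ^^ k) w) c < \<epsilon>"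
    and not_convergent: "\<not> (\<lambda>k. (g ^^ k) w) \<longlonglongrightarrow> c"
  obtains \<theta> where "\<theta> > 0" "infinite (range (\<lambda>k. (g ^^ k) w))"
    "delta_scrambled_set g \<theta> (range (\<lambda>k. (g ^^ k) w))"
proof -
  define a where "a k = (g ^^ k) w" for k
  obtain \<eta> where "\<eta> > 0" and leaves: "\<exists>\<^sub>F k in sequentially. \<eta> \<le> dist (a k) c"
    using not_convergent by (auto simp: a_def tendsto_iff not_eventually not_less)
  obtain \<rho> \<theta> where "0 < \<rho>" "\<rho> < \<eta>" "\<theta> > 0"
    and gap: "\<And>x. x \<in> X \<Longrightarrow> \<theta> \<le> \<bar>dist x c - \<rho>\<bar>"
    using countable_compact_distance_gap[OF assms(1,2) \<open>\<eta> > 0\<close>, where c = c] by blast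
  have "a n \<in> X" for n
    unfolding a_def using assms(4,7) by (rule funpow_mem)
  have shift: "(g ^^ n) ((g ^^ j) w) = a (n + j)" for n j
    by (simp add: a_def funpow_add_apply)
  have linger: "\<exists>\<^sub>F n in sequentially. \<forall>i\<le>L. dist (a (n + i)) c < \<epsilon>" if "\<epsilon> > 0" for L \<epsilon>
    unfolding a_def using orbit_lingers_near_fixed_point[OF assms(3-7) recurrent that] .
  have "delta_scrambled_pair g \<theta> ((g ^^ j) w) ((g ^^ k) w)" if "j < k" for j k
  proof (rule delta_scrambled_pairI, unfold shift)
    fix \<epsilon> :: real assume "\<epsilon> > 0"
    then have "\<exists>\<^sub>F n in sequentially. \<forall>i\<le>k. dist (a (n + i)) c < \<epsilon> / 2"
      by (intro linger) simp
    then show "\<exists>\<^sub>F n in sequentially. dist (a (n + j)) (a (n + k)) < \<epsilon>"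
    proof (rule frequently_elim1)
      fix n assume "\<forall>i\<le>k. dist (a (n + i)) c < \<epsilon> / 2"
      then have "dist (a (n + j)) c < \<epsilon> / 2" "dist (a (n + k)) c < \<epsilon> / 2"
        using \<open>j < k\<close> by simp_all
      then show "dist (a (n + j)) (a (n + k)) < \<epsilon>"
        by (rule dist_triangle_half_l)
    qed
  next
    have "\<exists>\<^sub>F n in sequentially. \<rho> \<le> dist (a n) c"
      using leaves by (rule frequently_elim1) (use \<open>\<rho> < \<eta>\<close> in simp)
    with \<open>j < k\<close> linger[OF \<open>0 < \<rho>\<close>, of k]
    have "\<exists>\<^sub>F n in sequentially. dist (a (n + j)) c < \<rho> \<and> \<rho> \<le> dist (a (n + k)) c"
      by (rule frequently_upcrossing)
    then show "\<exists>\<^sub>F n in sequentially. \<theta> \<le> dist (a (n + j)) (a (n + k))"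
    proof (rule frequently_elim1)
      fix n
      assume "dist (a (n + j)) c < \<rho> \<and> \<rho> \<le> dist (a (n + k)) c"
      moreover have "\<theta> \<le> \<bar>dist (a (n + j)) c - \<rho>\<bar>" "\<theta> \<le> \<bar>dist (a (n + k)) c - \<rho>\<bar>"
        using gap \<open>\<And>n. a n \<in> X\<close> by auto
      moreover note dist_triangle3[of "a (n + k)" c "a (n + j)"]
      ultimately show "\<theta> \<le> dist (a (n + j)) (a (n + k))"
        using \<open>\<theta> > 0\<close> by linarith
    qed
  qed
  then show thesis
    using that infinite_delta_scrambled_sequence[of \<theta> g "\<lambda>k. (g ^^ k) w"] \<open>\<theta> > 0\<close> by blast
qed

lemma recurrent_orbit_from_common_limit_point:
  fixes f :: "'a::metric_space \<Rightarrow> 'a"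
  assumes "continuous_on X f" "f ` X \<subseteq> X" "u \<in> X" "v \<in> X"
    and "delta_scrambled_pair f \<delta> u v" "\<delta> > 0"
    and "c \<in> X" "c \<in> common_limit_points f u v" "m > 0"
  obtains w where "w \<in> X"
    "\<And>\<epsilon>. \<epsilon> > 0 \<Longrightarrow> \<exists>\<^sub>F k in sequentially. dist (((f ^^ m) ^^ k) w) c < \<epsilon>"
    "\<not> (\<lambda>k. ((f ^^ m) ^^ k) w) \<longlonglongrightarrow> c"
proof -
  define P where "P \<epsilon> n \<longleftrightarrow> dist ((f ^^ n) u) c < \<epsilon> \<and> dist ((f ^^ n) v) c < \<epsilon>" for \<epsilon> n
  obtain r where residue: "\<And>\<epsilon>. \<epsilon> > 0 \<Longrightarrow> \<exists>\<^sub>F k in sequentially. P \<epsilon> (m * k + r)"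
    using frequently_residue_class[of m P] assms(8,9) by (auto simp: P_def common_limit_points_def)
  have orbit: "((f ^^ m) ^^ k) ((f ^^ r) z) = (f ^^ (m * k + r)) z" for k z
    by (simp add: funpow_mult funpow_add_apply)
  have recurrent: "\<exists>\<^sub>F k in sequentially. dist (((f ^^ m) ^^ k) ((f ^^ r) z)) c < \<epsilon>"
    if "z \<in> {u, v}" "\<epsilon> > 0" for z \<epsilon>
    using residue[OF that(2)] by (rule frequently_elim1) (use that(1) in \<open>auto simp: P_def orbit\<close>)
  have in_X: "(f ^^ r) z \<in> X" if "z \<in> {u, v}" for z
    using that assms(3,4) funpow_mem[OF assms(2)] by blast
  have "\<not> ((\<lambda>k. ((f ^^ m) ^^ k) ((f ^^ r) u)) \<longlonglongrightarrow> c \<and> (\<lambda>k. ((f ^^ m) ^^ k) ((f ^^ r) v)) \<longlonglongrightarrow> c)"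
  proof
    assume "(\<lambda>k. ((f ^^ m) ^^ k) ((f ^^ r) u)) \<longlonglongrightarrow> c \<and> (\<lambda>k. ((f ^^ m) ^^ k) ((f ^^ r) v)) \<longlonglongrightarrow> c"
    then have "(\<lambda>n. dist ((f ^^ n) ((f ^^ r) u)) ((f ^^ n) ((f ^^ r) v))) \<longlonglongrightarrow> 0"
      using in_X assms(9) by (intro funpow_orbits_asymptotic[OF assms(1,2,7)]) (auto simp: funpow_mult)
    then have "(\<lambda>n. dist ((f ^^ (n + r)) u) ((f ^^ (n + r)) v)) \<longlonglongrightarrow> 0"
      by (simp add: funpow_add_apply)
    then have "(\<lambda>n. dist ((f ^^ n) u) ((f ^^ n) v)) \<longlonglongrightarrow> 0"
      using LIMSEQ_offset[of "\<lambda>n. dist ((f ^^ n) u) ((f ^^ n) v)" r] by simp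
    with delta_scrambled_pair_not_asymptotic[OF assms(5,6)] show False
      by blast
  qed
  then consider "\<not> (\<lambda>k. ((f ^^ m) ^^ k) ((f ^^ r) u)) \<longlonglongrightarrow> c"
    | "\<not> (\<lambda>k. ((f ^^ m) ^^ k) ((f ^^ r) v)) \<longlonglongrightarrow> c"
    by blast
  then show thesis
    by cases (use that in_X recurrent in blast)+
qed

lemma common_limit_points_periodic_point:
  fixes f :: "'a::metric_space \<Rightarrow> 'a"
  assumes "compact X" "countable X" "continuous_on X f" "f ` X \<subseteq> X" "u \<in> X" "v \<in> X"
    and close: "\<And>\<epsilon>. \<epsilon> > 0 \<Longrightarrow> \<exists>\<^sub>F n in sequentially. dist ((f ^^ n) u) ((f ^^ n) v) < \<epsilon>"
  obtains c m where "c \<in> X" "c \<in> common_limit_points f u v" "m > 0" "(f ^^ m) c = c"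
proof -
  define Z where "Z = common_limit_points f u v"
  have "closed X"
    using assms(1) by (rule compact_imp_closed)
  have "Z \<subseteq> X"
    unfolding Z_def using \<open>closed X\<close> assms(4,5) by (rule common_limit_points_subset)
  moreover have "compact (X \<inter> Z)"
    unfolding Z_def by (rule compact_Int_closed[OF assms(1) closed_common_limit_points])
  ultimately have "compact Z"
    by (simp add: inf.absorb2)
  obtain l where "l \<in> Z"
    using compact_frequently_common_limit[OF assms(1), of "\<lambda>n. (f ^^ n) u" "\<lambda>n. (f ^^ n) v"]
      funpow_mem[OF assms(4,5)] close
    unfolding Z_def common_limit_points_def by blast
  then obtain c m where "c \<in> Z" "m > 0" "(f ^^ m) c = c"
    using countable_compact_invariant_periodic_point[OF \<open>compact Z\<close>, of f]
      countable_subset[OF \<open>Z \<subseteq> X\<close> assms(2)] continuous_on_subset[OF assms(3) \<open>Z \<subseteq> X\<close>]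
      common_limit_points_invariant[OF assms(3,4) \<open>closed X\<close> assms(5,6)]
    unfolding Z_def by blast
  with \<open>Z \<subseteq> X\<close> show thesis
    using that unfolding Z_def by blast
qed

theorem corollary1p6:
  fixes X :: "'a::metric_space set" and f :: "'a \<Rightarrow> 'a"
  assumes "compact X" and "countable X"
    and "continuous_on X f" and "f ` X \<subseteq> X"
    and "\<exists>u\<in>X. \<exists>v\<in>X. scrambled_pair f u v"
  shows "\<exists>\<delta>>0. \<exists>S\<subseteq>X. infinite S \<and> delta_scrambled_set f \<delta> S"
proof -
  obtain u v \<delta> where uv: "u \<in> X" "v \<in> X" "\<delta> > 0" "delta_scrambled_pair f \<delta> u v"
    using assms(5) by (auto simp: scrambled_pair_def)
  obtain c m where c: "c \<in> X" "c \<in> common_limit_points f u v" "m > 0" "(f ^^ m) c = c"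
    using common_limit_points_periodic_point[OF assms(1-4) uv(1,2)]
      delta_scrambled_pair_frequently_close[OF uv(4)] by blast
  obtain w where w: "w \<in> X"
    "\<And>\<epsilon>. \<epsilon> > 0 \<Longrightarrow> \<exists>\<^sub>F k in sequentially. dist (((f ^^ m) ^^ k) w) c < \<epsilon>"
    "\<not> (\<lambda>k. ((f ^^ m) ^^ k) w) \<longlonglongrightarrow> c"
    using recurrent_orbit_from_common_limit_point[OF assms(3,4) uv(1,2,4,3) c(1-3)] by blast
  define S where "S = range (\<lambda>k. ((f ^^ m) ^^ k) w)"
  have "(f ^^ m) ` X \<subseteq> X"
    using funpow_mem[OF assms(4)] by blast
  then obtain \<theta> where "\<theta> > 0" "infinite S" "delta_scrambled_set (f ^^ m) \<theta> S"
    using infinite_scrambled_orbit_near_fixed_point[OF assms(1,2) continuous_on_funpow[OF assms(3,4)]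
        _ c(1,4) w] unfolding S_def by blast
  moreover have "S \<subseteq> X"
    unfolding S_def using funpow_mem[OF \<open>(f ^^ m) ` X \<subseteq> X\<close> w(1)] by blast
  ultimately show ?thesis
    using delta_scrambled_set_funpow[OF c(3)] by blast
qed

end
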